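(* Let $I\subseteq\mathbb{R}$ be an interval, $f:I\to\mathbb{R}$ differentiable on the interior $I^\circ$, and $a,b\in I^\circ$ with $a<b$, $f'\in L[a,b]$. Let $g:[a,b]\to\mathbb{R}$ be continuous and $\alpha>0$. If $|f'|$ is convex on $[a,b]$, then, with $m=\frac{a+b}{2}$, $$\left|f(m)\left[J^{\alpha}_{m-}g(a)+J^{\alpha}_{m+}g(b)\right]-\left[J^{\alpha}_{m-}(fg)(a)+J^{\alpha}_{m+}(fg)(b)\right]\right|\le \frac{(b-a)^{\alpha+1}\,\|g\|_{[a,b],\infty}}{2^{\alpha+1}(\alpha+1)\Gamma(\alpha+1)}\left(|f'(a)|+|f'(b)|\right).$$
   Context: For $\alpha>0$ and an integrable function $h$, the Riemann–Liouville fractional integrals are $J^{\alpha}_{c+}h(x)=\frac{1}{\Gamma(\alpha)}\int_c^x (x-t)^{\alpha-1}h(t)\,dt$ for $x>c$, and $J^{\alpha}_{c-}h(x)=\frac{1}{\Gamma(\alpha)}\int_x^c (t-x)^{\alpha-1}h(t)\,dt$ for $x<c$, where $\Gamma$ is the Gamma function. Thus, with $m=\frac{a+b}{2}$, $J^{\alpha}_{m-}h(a)=\frac{1}{\Gamma(\alpha)}\int_a^{m}(t-a)^{\alpha-1}h(t)\,dt$ and $J^{\alpha}_{m+}h(b)=\frac{1}{\Gamma(\alpha)}\int_{m}^{b}(b-t)^{\alpha-1}h(t)\,dt$. Here $fg$ denotes the pointwise product. For a continuous $g$ and an interval $[c,d]$, $\|g\|_{[c,d],\infty}=\sup_{x\in[c,d]}|g(x)|$.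 *)

theory Defs
  imports "HOL-Analysis.Analysis"
begin

text \<open>Left-sided Riemann--Liouville fractional integral J^alpha_{c-} h (x), for x < c.\<close>
definition RL_left :: "real \<Rightarrow> real \<Rightarrow> (real \<Rightarrow> real) \<Rightarrow> real \<Rightarrow> real" where
  "RL_left \<alpha> c h x = (1 / Gamma \<alpha>) * (LBINT t:{x..c}. (t - x) powr (\<alpha> - 1) * h t)"

text \<open>Right-sided Riemann--Liouville fractional integral J^alpha_{c+} h (x), for x > c.\<close>
definition RL_right :: "real \<Rightarrow> real \<Rightarrow> (real \<Rightarrow> real) \<Rightarrow> real \<Rightarrow> real" where
  "RL_right \<alpha> c h x = (1 / Gamma \<alpha>) * (LBINT t:{c..x}. (x - t) powr (\<alpha> - 1) * h t)"

definition sup_norm_on :: "real \<Rightarrow> real \<Rightarrow> (real \<Rightarrow> real) \<Rightarrow> real" where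
  "sup_norm_on c d g = (SUP x\<in>{c..d}. \<bar>g x\<bar>)"

end

theory Submission
  imports Defs
begin

text \<open>
  Write \<open>m = (a + b) / 2\<close>, \<open>k = (b - a) / 2\<close>, \<open>A = |f'(a)|\<close>, \<open>B = |f'(b)|\<close> and
  \<open>N = sup |g|\<close> on \<open>[a, b]\<close>.  Up to the factor \<open>1 / \<Gamma>(\<alpha>)\<close>, the left-hand side is
  \<open>|\<integral>[a,m] (t-a)^(\<alpha>-1) (f m - f t) g t + \<integral>[m,b] (b-t)^(\<alpha>-1) (f m - f t) g t|\<close>.
  By convexity \<open>|f'|\<close> lies below its chord \<open>\<ell>\<close> on \<open>[a, b]\<close>, so by the fundamental
  theorem of calculus \<open>|f q - f p| \<le> \<Lambda> q - \<Lambda> p\<close>, where \<open>\<Lambda>\<close> is the primitive of \<open>\<ell>\<close>.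
  On each half, \<open>|f m - f t|\<close> is therefore bounded by a quadratic polynomial in the
  distance \<open>u\<close> of \<open>t\<close> to the endpoint, whose weighted integral is computed from the
  moments \<open>\<integral>[0,k] u^(\<alpha>-1) u^n = k^(\<alpha>+n) / (\<alpha>+n)\<close>.  The quadratic contributions of
  the two halves cancel and the linear ones add up to \<open>(A + B) k^(\<alpha>+1) / (\<alpha> (\<alpha>+1))\<close>.
\<close>

lemma power_moment_left:
  fixes \<alpha> k p :: real and n :: nat
  assumes "\<alpha> > 0" and "k \<ge> 0"
  shows "((\<lambda>t. (t - p) powr (\<alpha> - 1) * (t - p) ^ n) has_integral k powr (\<alpha> + n) / (\<alpha> + n)) {p..p + k}"
proof -
  define F where "F t = (t - p) powr (\<alpha> + n) / (\<alpha> + n)" for t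
  have "continuous_on {p..p + k} F"
    unfolding F_def using assms(1)
    by (intro continuous_on_divide continuous_on_const continuous_on_powr') (auto intro!: continuous_intros)
  moreover have "(F has_vector_derivative (t - p) powr (\<alpha> - 1) * (t - p) ^ n) (at t)"
    if "t \<in> {p<..<p + k}" for t
  proof -
    have pos: "t - p > 0" using that by simp
    have "(t - p) powr (\<alpha> + n - 1) = (t - p) powr (\<alpha> - 1) * (t - p) ^ n"
      using pos by (simp add: powr_add [symmetric] powr_realpow [symmetric] algebra_simps)
    moreover have "(F has_real_derivative (\<alpha> + n) * (t - p) powr (\<alpha> + n - 1) / (\<alpha> + n)) (at t)"
      unfolding F_def using pos by (auto intro!: derivative_eq_intros)
    ultimately show ?thesis
      using assms(1) by (simp add: has_real_derivative_iff_has_vector_derivative)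
  qed
  ultimately have "((\<lambda>t. (t - p) powr (\<alpha> - 1) * (t - p) ^ n) has_integral F (p + k) - F p) {p..p + k}"
    using assms(2) by (intro fundamental_theorem_of_calculus_interior) auto
  then show ?thesis
    using assms by (simp add: F_def)
qed

lemma power_moment_right:
  fixes \<alpha> k q :: real and n :: nat
  assumes "\<alpha> > 0" and "k \<ge> 0"
  shows "((\<lambda>t. (q - t) powr (\<alpha> - 1) * (q - t) ^ n) has_integral k powr (\<alpha> + n) / (\<alpha> + n)) {q - k..q}"
proof -
  have "((\<lambda>t. (t + q) powr (\<alpha> - 1) * (t + q) ^ n) has_integral k powr (\<alpha> + n) / (\<alpha> + n)) {-q..-q + k}"
    using power_moment_left [OF assms, of "-q" n] by simp
  then show ?thesis
    by (subst has_integral_reflect_real [symmetric]) (simp add: add.commute)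
qed

lemma kernel_integral:
  fixes d :: "real \<Rightarrow> real" and \<alpha> k A C :: real
  assumes "\<alpha> > 0" and "k \<ge> 0"
    and moment: "\<And>n::nat. ((\<lambda>t. d t powr (\<alpha> - 1) * d t ^ n) has_integral k powr (\<alpha> + n) / (\<alpha> + n)) S"
  shows "((\<lambda>t. d t powr (\<alpha> - 1) * (A * (k - d t) + C * (k\<^sup>2 - (d t)\<^sup>2))) has_integral
           A * k powr (\<alpha> + 1) / (\<alpha> * (\<alpha> + 1)) + C * (2 * k powr (\<alpha> + 2) / (\<alpha> * (\<alpha> + 2)))) S"
proof -
  have m0: "((\<lambda>t. d t powr (\<alpha> - 1)) has_integral k powr \<alpha> / \<alpha>) S"
    using moment [of 0] by simp
  have m1: "((\<lambda>t. d t powr (\<alpha> - 1) * d t) has_integral k powr (\<alpha> + 1) / (\<alpha> + 1)) S"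
    using moment [of 1] by simp
  have m2: "((\<lambda>t. d t powr (\<alpha> - 1) * (d t)\<^sup>2) has_integral k powr (\<alpha> + 2) / (\<alpha> + 2)) S"
    using moment [of 2] by simp
  have "((\<lambda>t. A * (k * d t powr (\<alpha> - 1) - d t powr (\<alpha> - 1) * d t)
              + C * (k\<^sup>2 * d t powr (\<alpha> - 1) - d t powr (\<alpha> - 1) * (d t)\<^sup>2)) has_integral
        A * (k * (k powr \<alpha> / \<alpha>) - k powr (\<alpha> + 1) / (\<alpha> + 1))
        + C * (k\<^sup>2 * (k powr \<alpha> / \<alpha>) - k powr (\<alpha> + 2) / (\<alpha> + 2))) S"
    by (intro has_integral_add has_integral_mult_right has_integral_diff m0 m1 m2)
  moreover have "k * k powr \<alpha> = k powr (\<alpha> + 1)" and "k\<^sup>2 * k powr \<alpha> = k powr (\<alpha> + 2)"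
    using assms(2) by (simp_all add: powr_add power2_eq_square)
  ultimately show ?thesis
    using assms(1) by (simp add: field_simps)
qed

lemma weighted_set_integrable:
  fixes w H :: "real \<Rightarrow> real"
  assumes "w \<in> borel_measurable borel" and "\<And>t. t \<in> {p..q} \<Longrightarrow> w t \<ge> 0"
    and "w integrable_on {p..q}" and H: "continuous_on {p..q} H"
  shows "set_integrable lborel {p..q} (\<lambda>t. w t * H t)"
proof -
  have "w absolutely_integrable_on {p..q}"
    using assms(2,3) by (intro nonnegative_absolutely_integrable_1) auto
  then have "(\<lambda>t. H t * w t) absolutely_integrable_on {p..q}"
    by (intro absolutely_integrable_bounded_measurable_product_real
          continuous_imp_measurable_on_sets_lebesgue [OF H]
          compact_imp_bounded compact_continuous_image [OF H]) auto
  then have "set_integrable lebesgue {p..q} (\<lambda>t. w t * H t)"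
    by (simp add: mult.commute)
  moreover have "(\<lambda>t. indicator {p..q} t *\<^sub>R (w t * H t)) \<in> borel_measurable lborel"
  proof -
    have "(\<lambda>t. w t * (indicator {p..q} t *\<^sub>R H t)) \<in> borel_measurable borel"
      using assms(1) borel_measurable_continuous_on_indicator [OF _ H] by measurable
    then show ?thesis
      by (simp add: mult.left_commute)
  qed
  ultimately show ?thesis
    unfolding set_integrable_def using integrable_completion by blast
qed

lemma weighted_deviation_bound:
  fixes w f g \<psi> :: "real \<Rightarrow> real"
  assumes w_meas: "w \<in> borel_measurable borel" and w_nonneg: "\<And>t. t \<in> {p..q} \<Longrightarrow> w t \<ge> 0"
    and w_int: "w integrable_on {p..q}"
    and f: "continuous_on {p..q} f" and g: "continuous_on {p..q} g"
    and g_bound: "\<And>t. t \<in> {p..q} \<Longrightarrow> \<bar>g t\<bar> \<le> N"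
    and f_dev: "\<And>t. t \<in> {p..q} \<Longrightarrow> \<bar>f c - f t\<bar> \<le> \<psi> t"
    and \<psi>_int: "((\<lambda>t. w t * \<psi> t) has_integral V) {p..q}"
  shows "\<bar>f c * (LBINT t:{p..q}. w t * g t) - (LBINT t:{p..q}. w t * (f t * g t))\<bar> \<le> N * V"
proof -
  let ?D = "\<lambda>t. w t * ((f c - f t) * g t)"
  have int_g: "set_integrable lborel {p..q} (\<lambda>t. w t * g t)"
    and int_fg: "set_integrable lborel {p..q} (\<lambda>t. w t * (f t * g t))"
    and int_D: "set_integrable lborel {p..q} ?D"
    using f g by (auto intro!: weighted_set_integrable [OF w_meas w_nonneg w_int] continuous_intros)
  have "f c * (LBINT t:{p..q}. w t * g t) - (LBINT t:{p..q}. w t * (f t * g t))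
        = (LBINT t:{p..q}. f c * (w t * g t) - w t * (f t * g t))"
    using int_g int_fg by (simp add: set_integral_diff)
  also have "\<dots> = (LBINT t:{p..q}. ?D t)"
    by (simp add: algebra_simps)
  also have "\<dots> = integral {p..q} ?D"
    using set_borel_integral_eq_integral [OF int_D] by simp
  finally have eq: "f c * (LBINT t:{p..q}. w t * g t) - (LBINT t:{p..q}. w t * (f t * g t))
                    = integral {p..q} ?D" .
  have "norm (integral {p..q} ?D) \<le> integral {p..q} (\<lambda>t. N * (w t * \<psi> t))"
  proof (rule integral_norm_bound_integral)
    show "?D integrable_on {p..q}"
      using set_borel_integral_eq_integral [OF int_D] by simp
    show "(\<lambda>t. N * (w t * \<psi> t)) integrable_on {p..q}"
      using \<psi>_int by (intro integrable_on_mult_right) blast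
    fix t assume t: "t \<in> {p..q}"
    have "norm (?D t) = w t * (\<bar>f c - f t\<bar> * \<bar>g t\<bar>)"
      using w_nonneg [OF t] by (simp add: abs_mult)
    also have "\<dots> \<le> w t * (\<psi> t * N)"
      using w_nonneg [OF t] f_dev [OF t] g_bound [OF t]
      by (intro mult_left_mono mult_mono) auto
    finally show "norm (?D t) \<le> N * (w t * \<psi> t)"
      by (simp add: algebra_simps)
  qed
  also have "\<dots> = N * V"
    using \<psi>_int by (simp add: integral_unique)
  finally show ?thesis
    using eq by simp
qed

definition chord_primitive :: "real \<Rightarrow> real \<Rightarrow> (real \<Rightarrow> real) \<Rightarrow> real \<Rightarrow> real" where
  "chord_primitive a b \<phi> x = \<phi> a * (x - a) + (\<phi> b - \<phi> a) / (2 * (b - a)) * (x - a)\<^sup>2"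

lemma chord_primitive_has_integral:
  fixes a b p q :: real and \<phi> :: "real \<Rightarrow> real"
  assumes "a < b" and "p \<le> q"
  shows "((\<lambda>s. (\<phi> b - \<phi> a) * (s - a) / (b - a) + \<phi> a) has_integral
           chord_primitive a b \<phi> q - chord_primitive a b \<phi> p) {p..q}"
proof (rule fundamental_theorem_of_calculus [OF assms(2)])
  fix s
  have "(chord_primitive a b \<phi> has_real_derivative (\<phi> b - \<phi> a) * (s - a) / (b - a) + \<phi> a) (at s)"
    unfolding chord_primitive_def
    by (rule derivative_eq_intros refl)+ (use assms(1) in \<open>simp add: field_simps\<close>)
  then show "(chord_primitive a b \<phi> has_vector_derivative (\<phi> b - \<phi> a) * (s - a) / (b - a) + \<phi> a)
               (at s within {p..q})"
    by (simp add: has_real_derivative_iff_has_vector_derivative has_vector_derivative_at_within)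
qed

lemma convex_deriv_increment_bound:
  fixes f f' :: "real \<Rightarrow> real" and a b p q :: real
  assumes "a < b"
    and deriv: "\<And>s. s \<in> {a..b} \<Longrightarrow> (f has_real_derivative f' s) (at s)"
    and convex: "convex_on {a..b} (\<lambda>s. \<bar>f' s\<bar>)"
    and "a \<le> p" "p \<le> q" "q \<le> b"
  shows "\<bar>f q - f p\<bar> \<le> chord_primitive a b (\<lambda>s. \<bar>f' s\<bar>) q - chord_primitive a b (\<lambda>s. \<bar>f' s\<bar>) p"
proof -
  have sub: "{p..q} \<subseteq> {a..b}" using assms by auto
  have "(f' has_integral f q - f p) {p..q}"
    using deriv sub assms(5)
    by (intro fundamental_theorem_of_calculus)
       (auto simp: has_real_derivative_iff_has_vector_derivative intro: has_vector_derivative_at_within)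
  moreover have "\<bar>f' s\<bar> \<le> (\<bar>f' b\<bar> - \<bar>f' a\<bar>) * (s - a) / (b - a) + \<bar>f' a\<bar>" if "s \<in> {p..q}" for s
    using convex_onD_Icc' [OF convex] that sub by auto
  ultimately have "norm (f q - f p)
      \<le> (chord_primitive a b (\<lambda>s. \<bar>f' s\<bar>) q - chord_primitive a b (\<lambda>s. \<bar>f' s\<bar>) p) \<bullet> 1"
    by (intro has_integral_norm_bound_integral_component
          [OF _ chord_primitive_has_integral [OF assms(1) assms(5)]]) auto
  then show ?thesis
    by simp
qed

lemma chord_primitive_midpoint:
  fixes a b k t :: real and \<phi> :: "real \<Rightarrow> real"
  assumes "b - a = 2 * k" and "k > 0"
  defines "C \<equiv> (\<phi> b - \<phi> a) / (4 * k)"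
  shows "chord_primitive a b \<phi> (a + k) - chord_primitive a b \<phi> t
           = \<phi> a * (k - (t - a)) + C * (k\<^sup>2 - (t - a)\<^sup>2)"
    and "chord_primitive a b \<phi> t - chord_primitive a b \<phi> (a + k)
           = \<phi> b * (k - (b - t)) + (- C) * (k\<^sup>2 - (b - t)\<^sup>2)"
  using assms unfolding chord_primitive_def C_def
  by (simp_all add: field_simps power2_eq_square)

context
  fixes f f' g :: "real \<Rightarrow> real" and a b N :: real
  assumes a_less_b: "a < b"
    and deriv: "\<And>s. s \<in> {a..b} \<Longrightarrow> (f has_real_derivative f' s) (at s)"
    and convex: "convex_on {a..b} (\<lambda>s. \<bar>f' s\<bar>)"
    and g: "continuous_on {a..b} g"
    and g_bound: "\<And>t. t \<in> {a..b} \<Longrightarrow> \<bar>g t\<bar> \<le> N"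
begin

lemma f_continuous: "continuous_on {a..b} f"
  using deriv by (meson DERIV_continuous continuous_at_imp_continuous_on)

lemma left_half_bound:
  assumes "\<alpha> > 0" and ba: "b - a = 2 * k"
  shows "\<bar>f (a + k) * (LBINT t:{a..a + k}. (t - a) powr (\<alpha> - 1) * g t)
            - (LBINT t:{a..a + k}. (t - a) powr (\<alpha> - 1) * (f t * g t))\<bar>
         \<le> N * (\<bar>f' a\<bar> * k powr (\<alpha> + 1) / (\<alpha> * (\<alpha> + 1))
                + (\<bar>f' b\<bar> - \<bar>f' a\<bar>) / (4 * k) * (2 * k powr (\<alpha> + 2) / (\<alpha> * (\<alpha> + 2))))"
proof (rule weighted_deviation_bound)
  have "k > 0"
    using a_less_b ba by simp
  then show "(\<lambda>t. (t - a) powr (\<alpha> - 1)) integrable_on {a..a + k}"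
    using power_moment_left [OF assms(1), of k a 0] by auto
  show "\<bar>f (a + k) - f t\<bar> \<le> \<bar>f' a\<bar> * (k - (t - a)) + (\<bar>f' b\<bar> - \<bar>f' a\<bar>) / (4 * k) * (k\<^sup>2 - (t - a)\<^sup>2)"
    if "t \<in> {a..a + k}" for t
    using convex_deriv_increment_bound [OF a_less_b deriv convex, of t "a + k"]
      chord_primitive_midpoint(1) [OF ba \<open>k > 0\<close>, of "\<lambda>s. \<bar>f' s\<bar>" t] that ba \<open>k > 0\<close>
    by auto
  show "((\<lambda>t. (t - a) powr (\<alpha> - 1) * (\<bar>f' a\<bar> * (k - (t - a))
            + (\<bar>f' b\<bar> - \<bar>f' a\<bar>) / (4 * k) * (k\<^sup>2 - (t - a)\<^sup>2))) has_integral
          \<bar>f' a\<bar> * k powr (\<alpha> + 1) / (\<alpha> * (\<alpha> + 1))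
          + (\<bar>f' b\<bar> - \<bar>f' a\<bar>) / (4 * k) * (2 * k powr (\<alpha> + 2) / (\<alpha> * (\<alpha> + 2)))) {a..a + k}"
    using \<open>k > 0\<close> by (intro kernel_integral power_moment_left assms(1)) auto
qed (use ba f_continuous g g_bound in \<open>auto intro: continuous_on_subset\<close>)

lemma right_half_bound:
  assumes "\<alpha> > 0" and ba: "b - a = 2 * k"
  shows "\<bar>f (b - k) * (LBINT t:{b - k..b}. (b - t) powr (\<alpha> - 1) * g t)
            - (LBINT t:{b - k..b}. (b - t) powr (\<alpha> - 1) * (f t * g t))\<bar>
         \<le> N * (\<bar>f' b\<bar> * k powr (\<alpha> + 1) / (\<alpha> * (\<alpha> + 1))
                - (\<bar>f' b\<bar> - \<bar>f' a\<bar>) / (4 * k) * (2 * k powr (\<alpha> + 2) / (\<alpha> * (\<alpha> + 2))))"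
  unfolding diff_conv_add_uminus [of _ "_ * (2 * _ / _)"] minus_mult_left
proof (rule weighted_deviation_bound)
  have "k > 0"
    using a_less_b ba by simp
  then show "(\<lambda>t. (b - t) powr (\<alpha> - 1)) integrable_on {b - k..b}"
    using power_moment_right [OF assms(1), of k b 0] by auto
  have mid: "b - k = a + k"
    using ba by simp
  show "\<bar>f (b - k) - f t\<bar> \<le> \<bar>f' b\<bar> * (k - (b - t)) + - ((\<bar>f' b\<bar> - \<bar>f' a\<bar>) / (4 * k)) * (k\<^sup>2 - (b - t)\<^sup>2)"
    if "t \<in> {b - k..b}" for t
    using convex_deriv_increment_bound [OF a_less_b deriv convex, of "a + k" t]
      chord_primitive_midpoint(2) [OF ba \<open>k > 0\<close>, of "\<lambda>s. \<bar>f' s\<bar>" t] that ba \<open>k > 0\<close>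
    by (auto simp: mid abs_minus_commute)
  show "((\<lambda>t. (b - t) powr (\<alpha> - 1) * (\<bar>f' b\<bar> * (k - (b - t))
            + - ((\<bar>f' b\<bar> - \<bar>f' a\<bar>) / (4 * k)) * (k\<^sup>2 - (b - t)\<^sup>2))) has_integral
          \<bar>f' b\<bar> * k powr (\<alpha> + 1) / (\<alpha> * (\<alpha> + 1))
          + - ((\<bar>f' b\<bar> - \<bar>f' a\<bar>) / (4 * k)) * (2 * k powr (\<alpha> + 2) / (\<alpha> * (\<alpha> + 2)))) {b - k..b}"
    using \<open>k > 0\<close> by (intro kernel_integral power_moment_right assms(1)) auto
qed (use ba f_continuous g g_bound in \<open>auto intro: continuous_on_subset\<close>)

text \<open>Adding the two halves, the quadratic contributions cancel; dividing by \<open>\<Gamma>(\<alpha>)\<close>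
  gives the estimate for the Riemann--Liouville integrals at the midpoint.\<close>

lemma RL_midpoint_bound:
  assumes "\<alpha> > 0"
  defines "m \<equiv> (a + b) / 2"
  shows "\<bar>f m * (RL_left \<alpha> m g a + RL_right \<alpha> m g b)
           - (RL_left \<alpha> m (\<lambda>t. f t * g t) a + RL_right \<alpha> m (\<lambda>t. f t * g t) b)\<bar>
         \<le> N * (\<bar>f' a\<bar> + \<bar>f' b\<bar>) * (((b - a) / 2) powr (\<alpha> + 1) / (\<alpha> * (\<alpha> + 1))) / Gamma \<alpha>"
proof -
  define k where "k = (b - a) / 2"
  have ba: "b - a = 2 * k" and mk: "m = a + k" "m = b - k"
    by (simp_all add: m_def k_def field_simps)
  have halves: "\<bar>(f m * (LBINT t:{a..m}. (t - a) powr (\<alpha> - 1) * g t)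
             - (LBINT t:{a..m}. (t - a) powr (\<alpha> - 1) * (f t * g t)))
         + (f m * (LBINT t:{m..b}. (b - t) powr (\<alpha> - 1) * g t)
             - (LBINT t:{m..b}. (b - t) powr (\<alpha> - 1) * (f t * g t)))\<bar>
        \<le> N * (\<bar>f' a\<bar> + \<bar>f' b\<bar>) * (k powr (\<alpha> + 1) / (\<alpha> * (\<alpha> + 1)))" (is "\<bar>?L + ?R\<bar> \<le> _")
  proof -
    have "\<bar>?L + ?R\<bar> \<le> \<bar>?L\<bar> + \<bar>?R\<bar>"
      by (rule abs_triangle_ineq)
    also have "\<dots> \<le> N * (\<bar>f' a\<bar> * k powr (\<alpha> + 1) / (\<alpha> * (\<alpha> + 1))
                + (\<bar>f' b\<bar> - \<bar>f' a\<bar>) / (4 * k) * (2 * k powr (\<alpha> + 2) / (\<alpha> * (\<alpha> + 2))))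
              + N * (\<bar>f' b\<bar> * k powr (\<alpha> + 1) / (\<alpha> * (\<alpha> + 1))
                - (\<bar>f' b\<bar> - \<bar>f' a\<bar>) / (4 * k) * (2 * k powr (\<alpha> + 2) / (\<alpha> * (\<alpha> + 2))))"
      using left_half_bound [OF assms(1) ba] right_half_bound [OF assms(1) ba]
      unfolding mk(1) [symmetric] mk(2) [symmetric] by (rule add_mono)
    also have "\<dots> = N * (\<bar>f' a\<bar> + \<bar>f' b\<bar>) * (k powr (\<alpha> + 1) / (\<alpha> * (\<alpha> + 1)))"
      by (simp add: algebra_simps add_divide_distrib)
    finally show ?thesis .
  qed
  have normalised: "f m * (RL_left \<alpha> m g a + RL_right \<alpha> m g b)
      - (RL_left \<alpha> m (\<lambda>t. f t * g t) a + RL_right \<alpha> m (\<lambda>t. f t * g t) b) = (?L + ?R) / Gamma \<alpha>"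
    unfolding RL_left_def RL_right_def
    by (simp add: diff_divide_distrib add_divide_distrib algebra_simps)
  have "Gamma \<alpha> > 0"
    using assms(1) by simp
  then show ?thesis
    unfolding normalised abs_divide abs_of_pos [OF \<open>Gamma \<alpha> > 0\<close>]
    by (intro divide_right_mono halves [unfolded k_def]) simp
qed

end

theorem theorem2p4:
  fixes I :: "real set" and f g :: "real \<Rightarrow> real" and a b \<alpha> :: real
  assumes "is_interval I"
    and "\<forall>x\<in>interior I. f differentiable (at x)"
    and "a \<in> interior I" and "b \<in> interior I" and "a < b"
    and "set_integrable lborel {a..b} (deriv f)"
    and "continuous_on {a..b} g"
    and "\<alpha> > 0"
    and "convex_on {a..b} (\<lambda>x. \<bar>deriv f x\<bar>)"
  shows "\<bar>f ((a + b) / 2) * (RL_left \<alpha> ((a + b) / 2) g a + RL_right \<alpha> ((a + b) / 2) g b)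
           - (RL_left \<alpha> ((a + b) / 2) (\<lambda>t. f t * g t) a + RL_right \<alpha> ((a + b) / 2) (\<lambda>t. f t * g t) b)\<bar>
         \<le> (b - a) powr (\<alpha> + 1) * sup_norm_on a b g
             / (2 powr (\<alpha> + 1) * (\<alpha> + 1) * Gamma (\<alpha> + 1))
             * (\<bar>deriv f a\<bar> + \<bar>deriv f b\<bar>)"
proof -
  define N where "N = sup_norm_on a b g"
  have "{a..b} \<subseteq> interior I"
    using assms(1,3,4) closed_segment_eq_real_ivl1 [of a b] assms(5)
    by (metis convex_contains_segment convex_interior is_interval_convex less_imp_le)
  then have deriv: "(f has_real_derivative deriv f s) (at s)" if "s \<in> {a..b}" for s
    using assms(2) that by (auto simp: DERIV_deriv_iff_real_differentiable)
  have g_bound: "\<bar>g t\<bar> \<le> N" if "t \<in> {a..b}" for t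
    unfolding N_def sup_norm_on_def using that assms(7)
    by (intro cSUP_upper bounded_imp_bdd_above compact_imp_bounded compact_continuous_image
          continuous_intros) auto
  have "Gamma \<alpha> > 0"
    using assms(8) by simp
  have "Gamma (\<alpha> + 1) = \<alpha> * Gamma \<alpha>"
    using assms(8) by (intro Gamma_plus1) (auto dest: nonpos_Ints_nonpos)
  moreover have "(b - a) powr (\<alpha> + 1) = 2 powr (\<alpha> + 1) * ((b - a) / 2) powr (\<alpha> + 1)"
    using assms(5) by (simp add: powr_divide)
  ultimately have normalisation: "N * (\<bar>deriv f a\<bar> + \<bar>deriv f b\<bar>) * (((b - a) / 2) powr (\<alpha> + 1) / (\<alpha> * (\<alpha> + 1)))
        / Gamma \<alpha> = (b - a) powr (\<alpha> + 1) * N / (2 powr (\<alpha> + 1) * (\<alpha> + 1) * Gamma (\<alpha> + 1))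
          * (\<bar>deriv f a\<bar> + \<bar>deriv f b\<bar>)"
    using \<open>Gamma \<alpha> > 0\<close> assms(8) by (simp add: divide_simps)
  show ?thesis
    unfolding N_def [symmetric] normalisation [symmetric]
    by (rule RL_midpoint_bound [OF assms(5) deriv assms(9,7) g_bound assms(8)])
qed

end
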